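(* Let $N$ be an NFA, let $L_0$ be a forward-admissible initial partition of its vertex set $V$, and let $L$ be the partition output by the forward refinement algorithm started from $L_0$. For a finite sequence $\tau$ over $A\cup\{\varepsilon\}$ let $R(\tau)$ be the set of vertices reachable on $\tau$ from the starting vertex $v_s$. Then for every such $\tau$ and every $Z\in L$, either $Z\subseteq R(\tau)$ or $Z\cap R(\tau)=\emptyset$.
   Context: An NFA $N$ over a finite alphabet $A$ consists of a finite vertex set $V$, a starting vertex $v_s\in V$, accepting action sets for the vertices, and a set of labeled edges $v\xrightarrow{\lambda}w$ with $v,w\in V$ and $\lambda\in A\cup\{\varepsilon\}$. For a vertex $u$ and a finite sequence $\tau=\tau_1\cdots\tau_r$ ($r\ge0$) with $\tau_i\in A\cup\{\varepsilon\}$, a vertex $w$ is reachable from $u$ on $\tau$ if there are vertices $u=v_1,\dots,v_{r+1}=w$ with an edge $v_i\xrightarrow{\tau_i}v_{i+1}$ for each $i$. A partition $L_0$ of $V$ is a forward-admissible initial partition if $\{v_s\}\in L_0$. Refining a partition $P$ of $V$ by a subset $Y\subseteq V$ means replacing $P$ by the nonempty sets among $\{B\cap Y, B\setminus Y : B\in P\}$. Forward refinement algorithm: given $L_i$, for each $Z\in L_i$ and each $\sigma\in A\cup\{\varepsilon\}$ let $Z[\sigma]=\{z\in V: z'\xrightarrow{\sigma}z\text{ for some }z'\in Z\}$; $L_{i+1}$ is obtained from $L_i$ by refining successively by all these sets $Z[\sigma]$. Repeat until $L_{i+1}=L_i$ and output this converged partition $L$. *)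

theory Defs
  imports Main "HOL-Library.Disjoint_Sets"
begin

text \<open>Labels: \<open>Some a\<close> for a letter \<open>a \<in> A\<close>, \<open>None\<close> for epsilon. Accepting action sets play no role
  in the statement and are omitted.\<close>

definition labels :: "'a set \<Rightarrow> 'a option set" where
  "labels A = Some ` A \<union> {None}"

definition is_NFA :: "'a set \<Rightarrow> 'v set \<Rightarrow> 'v \<Rightarrow> ('v \<times> 'a option \<times> 'v) set \<Rightarrow> bool" where
  "is_NFA A V vs E \<longleftrightarrow> finite A \<and> finite V \<and> vs \<in> V \<and>
     (\<forall>(v, l, w) \<in> E. v \<in> V \<and> l \<in> labels A \<and> w \<in> V)"

definition reachable_on :: "('v \<times> 'a option \<times> 'v) set \<Rightarrow> 'v \<Rightarrow> 'a option list \<Rightarrow> 'v \<Rightarrow> bool" where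
  "reachable_on E u \<tau> w \<longleftrightarrow>
     (\<exists>vl. length vl = length \<tau> + 1 \<and> vl ! 0 = u \<and> vl ! length \<tau> = w \<and>
        (\<forall>i < length \<tau>. (vl ! i, \<tau> ! i, vl ! Suc i) \<in> E))"

definition reach_set :: "'v set \<Rightarrow> ('v \<times> 'a option \<times> 'v) set \<Rightarrow> 'v \<Rightarrow> 'a option list \<Rightarrow> 'v set" where
  "reach_set V E vs \<tau> = {w \<in> V. reachable_on E vs \<tau> w}"

definition forward_admissible :: "'v set \<Rightarrow> 'v \<Rightarrow> 'v set set \<Rightarrow> bool" where
  "forward_admissible V vs L0 \<longleftrightarrow> partition_on V L0 \<and> {vs} \<in> L0"

definition refine :: "'v set set \<Rightarrow> 'v set \<Rightarrow> 'v set set" where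
  "refine P Y = {C. C \<noteq> {} \<and> (\<exists>B \<in> P. C = B \<inter> Y \<or> C = B - Y)}"

definition succ_set :: "('v \<times> 'a option \<times> 'v) set \<Rightarrow> 'v set \<Rightarrow> 'a option \<Rightarrow> 'v set" where
  "succ_set E Z \<sigma> = {z. \<exists>z' \<in> Z. (z', \<sigma>, z) \<in> E}"

definition fwd_step :: "'a set \<Rightarrow> ('v \<times> 'a option \<times> 'v) set \<Rightarrow> 'v set set \<Rightarrow> 'v set set \<Rightarrow> bool" where
  "fwd_step A E L L' \<longleftrightarrow>
     (\<exists>ys. set ys = {succ_set E Z \<sigma> | Z \<sigma>. Z \<in> L \<and> \<sigma> \<in> labels A} \<and> L' = foldl refine L ys)"

definition fwd_output :: "'a set \<Rightarrow> ('v \<times> 'a option \<times> 'v) set \<Rightarrow> 'v set set \<Rightarrow> 'v set set \<Rightarrow> bool" where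
  "fwd_output A E L0 L \<longleftrightarrow>
     (\<exists>Ls n. Ls 0 = L0 \<and> (\<forall>i \<le> n. fwd_step A E (Ls i) (Ls (Suc i))) \<and>
        (\<forall>i < n. Ls (Suc i) \<noteq> Ls i) \<and> Ls (Suc n) = Ls n \<and> L = Ls n)"

end

theory Submission
  imports Defs
begin

text \<open>Call a set Y compatible with a partition L if no block of L is split by Y. Along the
  refinement the blocks only shrink and the union stays fixed, so blocks of the output L lie in
  blocks of L0; hence {vs} is compatible with L. Since L is a fixed point of a refinement round,
  every successor set Z[\<sigma>] of a block Z is compatible with L. Compatible sets are closed under
  unions, and a compatible subset of the covered set is the union of the blocks it contains, so
  its successor set under \<sigma> is a union of such Z[\<sigma>] and again compatible. Induction over \<tau>
  gives the claim for every R(\<tau>).\<close>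

definition block_compatible :: "'v set set \<Rightarrow> 'v set \<Rightarrow> bool" where
  "block_compatible P Y \<longleftrightarrow> (\<forall>C\<in>P. C \<subseteq> Y \<or> C \<inter> Y = {})"

definition finer :: "'v set set \<Rightarrow> 'v set set \<Rightarrow> bool" where
  "finer P' P \<longleftrightarrow> \<Union>P' = \<Union>P \<and> (\<forall>C\<in>P'. \<exists>B\<in>P. C \<subseteq> B)"

lemma block_compatible_Union:
  assumes "\<And>Y. Y \<in> S \<Longrightarrow> block_compatible P Y"
  shows "block_compatible P (\<Union>S)"
  using assms unfolding block_compatible_def by blast

lemma Union_compatible_blocks:
  assumes "Y \<subseteq> \<Union>P" "block_compatible P Y"
  shows "Y = \<Union>{C\<in>P. C \<subseteq> Y}"
proof
  show "Y \<subseteq> \<Union>{C\<in>P. C \<subseteq> Y}"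
  proof
    fix x assume "x \<in> Y"
    then obtain C where "C \<in> P" "x \<in> C" using assms(1) by blast
    then show "x \<in> \<Union>{C\<in>P. C \<subseteq> Y}"
      using assms(2) \<open>x \<in> Y\<close> unfolding block_compatible_def by blast
  qed
qed blast

lemma succ_set_Union: "succ_set E (\<Union>S) \<sigma> = (\<Union>Z\<in>S. succ_set E Z \<sigma>)"
  unfolding succ_set_def by blast

lemma block_compatible_succ_set:
  assumes "Y \<subseteq> \<Union>P" "block_compatible P Y"
    and "\<And>Z. Z \<in> P \<Longrightarrow> block_compatible P (succ_set E Z \<sigma>)"
  shows "block_compatible P (succ_set E Y \<sigma>)"
proof -
  have "succ_set E Y \<sigma> = (\<Union>Z\<in>{C\<in>P. C \<subseteq> Y}. succ_set E Z \<sigma>)"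
    using Union_compatible_blocks[OF assms(1,2)] succ_set_Union by metis
  then show ?thesis
    using assms(3) block_compatible_Union[of "(\<lambda>Z. succ_set E Z \<sigma>) ` {C\<in>P. C \<subseteq> Y}" P]
    by auto
qed

lemma block_compatible_coarser_block:
  assumes "finer P Q" "disjoint Q" "B \<in> Q"
  shows "block_compatible P B"
  unfolding block_compatible_def
proof
  fix C assume "C \<in> P"
  then obtain B' where "B' \<in> Q" "C \<subseteq> B'"
    using assms(1) unfolding finer_def by blast
  then show "C \<subseteq> B \<or> C \<inter> B = {}"
    using disjointD[OF assms(2) \<open>B' \<in> Q\<close> assms(3)] by blast
qed

lemma finer_refl: "finer P P"
  unfolding finer_def by blast

lemma finer_trans: "finer P'' P' \<Longrightarrow> finer P' P \<Longrightarrow> finer P'' P"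
  unfolding finer_def by (metis order_trans)

lemma finer_refine: "finer (refine P Y) P"
  unfolding finer_def
proof
  show "\<Union>(refine P Y) = \<Union>P"
  proof
    show "\<Union>P \<subseteq> \<Union>(refine P Y)"
    proof
      fix x assume "x \<in> \<Union>P"
      then obtain B where "B \<in> P" "x \<in> B" by blast
      then have "x \<in> (if x \<in> Y then B \<inter> Y else B - Y)"
        and "(if x \<in> Y then B \<inter> Y else B - Y) \<in> refine P Y"
        unfolding refine_def by auto
      then show "x \<in> \<Union>(refine P Y)" by blast
    qed
  qed (auto simp: refine_def)
qed (auto simp: refine_def)

lemma finer_foldl_refine: "finer (foldl refine P ys) P"
proof (induction ys arbitrary: P)
  case Nil
  show ?case by (simp add: finer_refl)
next
  case (Cons y ys)
  show ?case using finer_trans[OF Cons.IH finer_refine] by simp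
qed

lemma refine_block_compatible: "block_compatible (refine P Y) Y"
  unfolding block_compatible_def refine_def by blast

lemma foldl_refine_block_compatible:
  "Y \<in> set ys \<Longrightarrow> block_compatible (foldl refine P ys) Y"
proof (induction ys arbitrary: P)
  case Nil
  then show ?case by simp
next
  case (Cons y ys)
  show ?case
  proof (cases "Y \<in> set ys")
    case True
    then show ?thesis using Cons.IH by simp
  next
    case False
    with Cons.prems have "Y = y" by simp
    show ?thesis
      unfolding block_compatible_def
    proof
      fix C assume "C \<in> foldl refine P (y # ys)"
      then obtain B where "B \<in> refine P y" "C \<subseteq> B"
        using finer_foldl_refine[of "refine P y" ys] unfolding finer_def by auto
      then show "C \<subseteq> Y \<or> C \<inter> Y = {}"
        using refine_block_compatible[of P y] \<open>Y = y\<close> unfolding block_compatible_def by blast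
    qed
  qed
qed

lemma finer_fwd_step: "fwd_step A E P P' \<Longrightarrow> finer P' P"
  unfolding fwd_step_def using finer_foldl_refine by blast

lemma fwd_step_fixpoint_succ_set:
  assumes "fwd_step A E L L" "Z \<in> L" "\<sigma> \<in> labels A"
  shows "block_compatible L (succ_set E Z \<sigma>)"
proof -
  obtain ys where ys: "set ys = {succ_set E Z \<sigma> | Z \<sigma>. Z \<in> L \<and> \<sigma> \<in> labels A}"
    and L: "L = foldl refine L ys"
    using assms(1) unfolding fwd_step_def by blast
  have "succ_set E Z \<sigma> \<in> set ys"
    unfolding ys using assms(2,3) by blast
  then show ?thesis
    using foldl_refine_block_compatible L by metis
qed

lemma fwd_output_fixpoint: "fwd_output A E L0 L \<Longrightarrow> fwd_step A E L L"
  unfolding fwd_output_def by fastforce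

lemma fwd_output_finer:
  assumes "fwd_output A E L0 L"
  shows "finer L L0"
proof -
  obtain Ls n where Ls: "Ls 0 = L0" "\<forall>i \<le> n. fwd_step A E (Ls i) (Ls (Suc i))" "L = Ls n"
    using assms unfolding fwd_output_def by blast
  have "finer (Ls i) L0" if "i \<le> n" for i
    using that
  proof (induction i)
    case 0
    show ?case using Ls(1) finer_refl by simp
  next
    case (Suc i)
    then show ?case
      using Ls(2) finer_fwd_step finer_trans by (metis Suc_leD)
  qed
  then show ?thesis using Ls(3) by simp
qed

lemma reachable_on_Nil: "reachable_on E u [] w \<longleftrightarrow> w = u"
  unfolding reachable_on_def by (auto intro: exI[of _ "[u]"])

lemma reachable_on_snoc:
  "reachable_on E u (\<tau> @ [\<sigma>]) w \<longleftrightarrow> (\<exists>w'. reachable_on E u \<tau> w' \<and> (w', \<sigma>, w) \<in> E)"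
proof
  assume "reachable_on E u (\<tau> @ [\<sigma>]) w"
  then obtain vl where vl: "length vl = length \<tau> + 2" "vl ! 0 = u" "vl ! Suc (length \<tau>) = w"
    "\<forall>i < Suc (length \<tau>). (vl ! i, (\<tau> @ [\<sigma>]) ! i, vl ! Suc i) \<in> E"
    unfolding reachable_on_def by auto
  have "reachable_on E u \<tau> (vl ! length \<tau>)"
    unfolding reachable_on_def
  proof (intro exI[of _ "take (length \<tau> + 1) vl"] conjI allI impI)
    fix i assume "i < length \<tau>"
    then show "(take (length \<tau> + 1) vl ! i, \<tau> ! i, take (length \<tau> + 1) vl ! Suc i) \<in> E"
      using vl(4)[rule_format, of i] by (auto simp: nth_append)
  qed (use vl in auto)
  moreover have "(vl ! length \<tau>, \<sigma>, w) \<in> E"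
    using vl(3) vl(4)[rule_format, of "length \<tau>"] by simp
  ultimately show "\<exists>w'. reachable_on E u \<tau> w' \<and> (w', \<sigma>, w) \<in> E" by blast
next
  assume "\<exists>w'. reachable_on E u \<tau> w' \<and> (w', \<sigma>, w) \<in> E"
  then obtain w' vl where vl: "length vl = length \<tau> + 1" "vl ! 0 = u" "vl ! length \<tau> = w'"
    "\<forall>i < length \<tau>. (vl ! i, \<tau> ! i, vl ! Suc i) \<in> E" and e: "(w', \<sigma>, w) \<in> E"
    unfolding reachable_on_def by auto
  show "reachable_on E u (\<tau> @ [\<sigma>]) w"
    unfolding reachable_on_def
  proof (intro exI[of _ "vl @ [w]"] conjI allI impI)
    fix i assume "i < length (\<tau> @ [\<sigma>])"
    then consider "i < length \<tau>" | "i = length \<tau>" by fastforce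
    then show "((vl @ [w]) ! i, (\<tau> @ [\<sigma>]) ! i, (vl @ [w]) ! Suc i) \<in> E"
      by cases (use vl e in \<open>auto simp: nth_append\<close>)
  qed (use vl in \<open>auto simp: nth_append\<close>)
qed

lemma reach_set_Nil: "vs \<in> V \<Longrightarrow> reach_set V E vs [] = {vs}"
  unfolding reach_set_def reachable_on_Nil by blast

lemma reach_set_snoc:
  assumes "\<forall>(v, l, w) \<in> E. v \<in> V \<and> w \<in> V"
  shows "reach_set V E vs (\<tau> @ [\<sigma>]) = succ_set E (reach_set V E vs \<tau>) \<sigma>"
  using assms unfolding reach_set_def reachable_on_snoc succ_set_def by blast

lemma block_compatible_reach_set:
  assumes edges: "\<forall>(v, l, w) \<in> E. v \<in> V \<and> w \<in> V"
    and "vs \<in> V" "\<Union>L = V" "block_compatible L {vs}"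
    and stable: "\<And>Z \<sigma>. Z \<in> L \<Longrightarrow> \<sigma> \<in> labels A \<Longrightarrow> block_compatible L (succ_set E Z \<sigma>)"
    and "set \<tau> \<subseteq> labels A"
  shows "block_compatible L (reach_set V E vs \<tau>)"
  using \<open>set \<tau> \<subseteq> labels A\<close>
proof (induction \<tau> rule: rev_induct)
  case Nil
  then show ?case using assms(2,4) reach_set_Nil by metis
next
  case (snoc \<sigma> \<tau>)
  have "reach_set V E vs \<tau> \<subseteq> \<Union>L"
    using \<open>\<Union>L = V\<close> unfolding reach_set_def by blast
  moreover have "block_compatible L (reach_set V E vs \<tau>)"
    using snoc by simp
  moreover have "\<And>Z. Z \<in> L \<Longrightarrow> block_compatible L (succ_set E Z \<sigma>)"
    using snoc.prems stable by simp
  ultimately show ?case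
    unfolding reach_set_snoc[OF edges] by (rule block_compatible_succ_set)
qed

theorem mainTheorem6:
  fixes A :: "'a set" and V :: "'v set" and vs :: 'v
    and E :: "('v \<times> 'a option \<times> 'v) set"
  assumes "is_NFA A V vs E"
    and "forward_admissible V vs L0"
    and "fwd_output A E L0 L"
    and "set \<tau> \<subseteq> labels A"
    and "Z \<in> L"
  shows "Z \<subseteq> reach_set V E vs \<tau> \<or> Z \<inter> reach_set V E vs \<tau> = {}"
proof -
  have edges: "\<forall>(v, l, w) \<in> E. v \<in> V \<and> w \<in> V" and "vs \<in> V"
    using assms(1) unfolding is_NFA_def by auto
  have L0: "partition_on V L0" "{vs} \<in> L0"
    using assms(2) unfolding forward_admissible_def by auto
  have "finer L L0"
    using assms(3) by (rule fwd_output_finer)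
  then have "\<Union>L = V"
    using partition_onD1[OF L0(1)] unfolding finer_def by simp
  moreover have "block_compatible L {vs}"
    using \<open>finer L L0\<close> partition_onD2[OF L0(1)] L0(2) by (rule block_compatible_coarser_block)
  moreover have "\<And>Z \<sigma>. Z \<in> L \<Longrightarrow> \<sigma> \<in> labels A \<Longrightarrow> block_compatible L (succ_set E Z \<sigma>)"
    using fwd_output_fixpoint[OF assms(3)] by (rule fwd_step_fixpoint_succ_set)
  ultimately have "block_compatible L (reach_set V E vs \<tau>)"
    using block_compatible_reach_set[OF edges \<open>vs \<in> V\<close>] assms(4) by blast
  then show ?thesis
    using assms(5) unfolding block_compatible_def by blast
qed

end
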